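(* Let $G=(V,E,w)$ be a transitive DAG with nonnegative vertex weights, let $U\subseteq V$ be nonempty and let $d\ge \frac12|U|$. Then there exists a vertex $v\in U_d$ with $r_U(v)=\mathrm{opt}(U)$. In particular $\max_{v\in U_d} r_U(v)=\mathrm{opt}(U)$.
   Context: A DAG $G=(V,E)$ is transitive if $(v_1,v_2),(v_2,v_3)\in E$ implies $(v_1,v_3)\in E$. A chain is a set of vertices any two distinct members of which are joined by an edge; its weight is the sum of the weights of its vertices. For $U\subseteq V$, $\mathrm{opt}(U)$ is the maximum weight of a chain contained in $U$. For $v\in U$, $r_U(v)$ is the maximum weight of a chain contained in $U$ that contains $v$; $U_{-v}=\{u\in U:(u,v)\in E\}$ and $U_{+v}=\{u\in U:(v,u)\in E\}$; and for a real $d$, $U_d=\{v\in U:\max(|U_{-v}|,|U_{+v}|)\le d\}$. *)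

theory Defs
  imports Complex_Main
begin

definition dag :: "'a set \<Rightarrow> ('a \<times> 'a) set \<Rightarrow> bool" where
  "dag V E \<longleftrightarrow> finite V \<and> E \<subseteq> V \<times> V \<and> acyclic E"

definition transitive_dag :: "'a set \<Rightarrow> ('a \<times> 'a) set \<Rightarrow> bool" where
  "transitive_dag V E \<longleftrightarrow> dag V E \<and>
     (\<forall>v1 v2 v3. (v1, v2) \<in> E \<and> (v2, v3) \<in> E \<longrightarrow> (v1, v3) \<in> E)"

definition is_chain :: "('a \<times> 'a) set \<Rightarrow> 'a set \<Rightarrow> bool" where
  "is_chain E C \<longleftrightarrow> (\<forall>a\<in>C. \<forall>b\<in>C. a \<noteq> b \<longrightarrow> (a, b) \<in> E \<or> (b, a) \<in> E)"

definition chain_weight :: "('a \<Rightarrow> real) \<Rightarrow> 'a set \<Rightarrow> real" where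
  "chain_weight w C = (\<Sum>v\<in>C. w v)"

definition opt :: "('a \<times> 'a) set \<Rightarrow> ('a \<Rightarrow> real) \<Rightarrow> 'a set \<Rightarrow> real" where
  "opt E w U = Max {chain_weight w C | C. C \<subseteq> U \<and> is_chain E C}"

definition rU :: "('a \<times> 'a) set \<Rightarrow> ('a \<Rightarrow> real) \<Rightarrow> 'a set \<Rightarrow> 'a \<Rightarrow> real" where
  "rU E w U v = Max {chain_weight w C | C. C \<subseteq> U \<and> is_chain E C \<and> v \<in> C}"

definition U_minus :: "('a \<times> 'a) set \<Rightarrow> 'a set \<Rightarrow> 'a \<Rightarrow> 'a set" where
  "U_minus E U v = {u \<in> U. (u, v) \<in> E}"

definition U_plus :: "('a \<times> 'a) set \<Rightarrow> 'a set \<Rightarrow> 'a \<Rightarrow> 'a set" where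
  "U_plus E U v = {u \<in> U. (v, u) \<in> E}"

definition U_d :: "('a \<times> 'a) set \<Rightarrow> 'a set \<Rightarrow> real \<Rightarrow> 'a set" where
  "U_d E U d = {v \<in> U. real (max (card (U_minus E U v)) (card (U_plus E U v))) \<le> d}"

end

theory Submission
  imports Defs
begin

text \<open>Take a maximum-weight chain \<open>D\<close> that cannot be extended; with nonnegative weights one
exists. The in-degree \<open>a(x) = |U\<^sub>-\<^sub>x|\<close> strictly increases along \<open>D\<close> and vanishes at its
bottom. Let \<open>v\<close> be the highest element of \<open>D\<close> with \<open>a(v) \<le> d\<close> and \<open>v'\<close> its successor in
\<open>D\<close>. Nothing of \<open>U\<close> lies strictly between \<open>v\<close> and \<open>v'\<close>, since it could be added to \<open>D\<close>,
so \<open>U\<^sub>+\<^sub>v\<close> and \<open>U\<^sub>-\<^sub>v\<^sub>'\<close> are disjoint and \<open>|U\<^sub>+\<^sub>v| \<le> |U| - a(v') < |U| - d \<le> d\<close>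
(if \<open>v\<close> is the top of \<open>D\<close>, \<open>U\<^sub>+\<^sub>v\<close> is even empty). Hence \<open>v \<in> U\<^sub>d\<close>, and
\<open>r\<^sub>U(v) = opt(U)\<close> because \<open>v \<in> D\<close>.\<close>

definition maximal_chain :: "('a \<times> 'a) set \<Rightarrow> 'a set \<Rightarrow> 'a set \<Rightarrow> bool" where
  "maximal_chain E U C \<longleftrightarrow>
     C \<subseteq> U \<and> is_chain E C \<and> (\<forall>u\<in>U. is_chain E (insert u C) \<longrightarrow> u \<in> C)"

lemma transitive_dagD:
  assumes "transitive_dag V E"
  shows "trans E" and "irrefl E" and "finite V"
proof -
  show "trans E"
    using assms unfolding transitive_dag_def trans_def by blast
  show "finite V" using assms unfolding transitive_dag_def dag_def by blast
  have "E\<^sup>+ = E" using \<open>trans E\<close> by (rule trancl_id)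
  then show "irrefl E"
    using assms unfolding transitive_dag_def dag_def acyclic_irrefl by simp
qed

lemma chain_weight_le_opt:
  assumes "finite U" "C \<subseteq> U" "is_chain E C"
  shows "chain_weight w C \<le> opt E w U"
  unfolding opt_def using assms by (intro Max_ge) auto

lemma ex_chain_weight_eq_opt:
  assumes "finite U"
  shows "\<exists>C \<subseteq> U. is_chain E C \<and> chain_weight w C = opt E w U"
proof -
  have "is_chain E {}" unfolding is_chain_def by simp
  then have "opt E w U \<in> {chain_weight w C | C. C \<subseteq> U \<and> is_chain E C}"
    unfolding opt_def using assms by (intro Max_in) auto
  then show ?thesis by auto
qed

lemma chain_weight_le_rU:
  assumes "finite U" "C \<subseteq> U" "is_chain E C" "v \<in> C"
  shows "chain_weight w C \<le> rU E w U v"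
  unfolding rU_def using assms by (intro Max_ge) auto

lemma rU_le_opt:
  assumes "finite U" "v \<in> U"
  shows "rU E w U v \<le> opt E w U"
proof -
  have "is_chain E {v}" unfolding is_chain_def by simp
  then have "rU E w U v \<in> {chain_weight w C | C. C \<subseteq> U \<and> is_chain E C \<and> v \<in> C}"
    unfolding rU_def using assms by (intro Max_in) auto
  then show ?thesis using assms chain_weight_le_opt by fastforce
qed

lemma rU_eq_opt:
  assumes "finite U" "C \<subseteq> U" "is_chain E C" "v \<in> C" "chain_weight w C = opt E w U"
  shows "rU E w U v = opt E w U"
proof (rule antisym)
  show "rU E w U v \<le> opt E w U" using assms(1,2,4) by (intro rU_le_opt) auto
  show "opt E w U \<le> rU E w U v" using chain_weight_le_rU[OF assms(1-4), of w] assms(5) by simp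
qed

lemma Max_rU_image_eq_opt:
  assumes "finite U" "S \<subseteq> U" "v \<in> S" "rU E w U v = opt E w U"
  shows "Max (rU E w U ` S) = opt E w U"
proof (rule Max_eqI)
  show "finite (rU E w U ` S)" using assms(1,2) finite_subset by blast
  show "r \<le> opt E w U" if "r \<in> rU E w U ` S" for r
    using that assms(2) rU_le_opt[OF assms(1)] by blast
  show "opt E w U \<in> rU E w U ` S" using assms(3,4) by (metis imageI)
qed

lemma ex_maximal_chain_weight_eq_opt:
  assumes "finite U" and nonneg: "\<forall>u\<in>U. w u \<ge> 0"
  shows "\<exists>D. maximal_chain E U D \<and> chain_weight w D = opt E w U"
proof -
  define optimal where "optimal C \<longleftrightarrow> C \<subseteq> U \<and> is_chain E C \<and> chain_weight w C = opt E w U" for C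
  have "\<exists>C. optimal C" using ex_chain_weight_eq_opt[OF \<open>finite U\<close>] unfolding optimal_def by blast
  moreover have "\<forall>C. optimal C \<longrightarrow> card C < Suc (card U)"
    unfolding optimal_def using \<open>finite U\<close> by (simp add: card_mono le_imp_less_Suc)
  ultimately obtain D where D: "optimal D" and largest: "\<And>C. optimal C \<Longrightarrow> card C \<le> card D"
    using ex_has_greatest_nat[of optimal _ card] by blast
  have "u \<in> D" if "u \<in> U" "is_chain E (insert u D)" for u
  proof (rule ccontr)
    assume "u \<notin> D"
    have "finite D" using D \<open>finite U\<close> finite_subset unfolding optimal_def by blast
    have "chain_weight w (insert u D) = w u + chain_weight w D"
      unfolding chain_weight_def using \<open>finite D\<close> \<open>u \<notin> D\<close> by simp
    then have "optimal (insert u D)"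
      using D that nonneg chain_weight_le_opt[OF \<open>finite U\<close>, of "insert u D" E w]
      unfolding optimal_def by fastforce
    then show False using largest \<open>finite D\<close> \<open>u \<notin> D\<close> by fastforce
  qed
  then show ?thesis using D unfolding optimal_def maximal_chain_def by blast
qed

lemma maximal_chainD:
  assumes "maximal_chain E U D" "u \<in> U" "\<And>c. c \<in> D \<Longrightarrow> (c, u) \<in> E \<or> (u, c) \<in> E"
  shows "u \<in> D"
proof -
  have "is_chain E (insert u D)"
    using assms unfolding maximal_chain_def is_chain_def by blast
  then show ?thesis using assms unfolding maximal_chain_def by blast
qed

lemma maximal_chain_U_minus_bottom:
  assumes "trans E" "irrefl E" "maximal_chain E U D" "m \<in> D"
    and "\<And>c. c \<in> D \<Longrightarrow> c = m \<or> (m, c) \<in> E"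
  shows "U_minus E U m = {}"
proof (rule ccontr)
  assume "U_minus E U m \<noteq> {}"
  then obtain u where u: "u \<in> U" "(u, m) \<in> E" unfolding U_minus_def by blast
  have "(u, c) \<in> E" if "c \<in> D" for c
    using assms(5)[OF that] assms(1) u(2) by (auto dest: transD)
  then have "u \<in> D" using maximal_chainD[OF assms(3) u(1)] by blast
  then show False using assms u by (metis irreflD transD)
qed

lemma maximal_chain_U_plus_top:
  assumes "trans E" "irrefl E" "maximal_chain E U D" "v \<in> D"
    and "\<And>c. c \<in> D \<Longrightarrow> c = v \<or> (c, v) \<in> E"
  shows "U_plus E U v = {}"
proof (rule ccontr)
  assume "U_plus E U v \<noteq> {}"
  then obtain u where u: "u \<in> U" "(v, u) \<in> E" unfolding U_plus_def by blast
  have "(c, u) \<in> E" if "c \<in> D" for c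
    using assms(5)[OF that] assms(1) u(2) by (auto dest: transD)
  then have "u \<in> D" using maximal_chainD[OF assms(3) u(1)] by blast
  then show False using assms u by (metis irreflD transD)
qed

lemma maximal_chain_U_plus_U_minus_disjoint:
  assumes "trans E" "irrefl E" "maximal_chain E U D" "v \<in> D" "v' \<in> D"
    and "\<And>c. c \<in> D \<Longrightarrow> c = v \<or> (c, v) \<in> E \<or> c = v' \<or> (v', c) \<in> E"
  shows "U_plus E U v \<inter> U_minus E U v' = {}"
proof (rule ccontr)
  assume "U_plus E U v \<inter> U_minus E U v' \<noteq> {}"
  then obtain u where u: "u \<in> U" "(v, u) \<in> E" "(u, v') \<in> E"
    unfolding U_plus_def U_minus_def by blast
  have "(c, u) \<in> E \<or> (u, c) \<in> E" if "c \<in> D" for c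
    using assms(6)[OF that] assms(1) u(2,3) by (auto dest: transD)
  then have "u \<in> D" using maximal_chainD[OF assms(3) u(1)] by blast
  then show False using assms u by (metis irreflD transD)
qed

lemma card_U_minus_less:
  assumes "trans E" "irrefl E" "finite U" "x \<in> U" "(x, y) \<in> E"
  shows "card (U_minus E U x) < card (U_minus E U y)"
proof (rule psubset_card_mono)
  show "finite (U_minus E U y)" unfolding U_minus_def using assms by simp
  have "x \<in> U_minus E U y - U_minus E U x" unfolding U_minus_def using assms by (simp add: irreflD)
  moreover have "U_minus E U x \<subseteq> U_minus E U y" unfolding U_minus_def using assms by (auto dest: transD)
  ultimately show "U_minus E U x \<subset> U_minus E U y" by blast
qed

lemma chain_edge_if_card_U_minus_le:
  assumes "trans E" "irrefl E" "finite U" "is_chain E D" "D \<subseteq> U" "x \<in> D" "y \<in> D"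
    and "card (U_minus E U x) \<le> card (U_minus E U y)"
  shows "x = y \<or> (x, y) \<in> E"
  using assms card_U_minus_less[OF assms(1-3), of y x] unfolding is_chain_def by fastforce

lemma card_U_plus_add_card_U_minus_le:
  assumes "finite U" "U_plus E U v \<inter> U_minus E U v' = {}"
  shows "card (U_plus E U v) + card (U_minus E U v') \<le> card U"
proof -
  have "card (U_plus E U v) + card (U_minus E U v') = card (U_plus E U v \<union> U_minus E U v')"
    using assms by (intro card_Un_disjoint[symmetric]) (auto simp: U_plus_def U_minus_def)
  also have "\<dots> \<le> card U"
    using assms by (intro card_mono) (auto simp: U_plus_def U_minus_def)
  finally show ?thesis .
qed

lemma maximal_chain_ex_U_minus_empty:
  assumes "trans E" "irrefl E" "finite U" "U \<noteq> {}" "maximal_chain E U D"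
  shows "\<exists>m\<in>D. U_minus E U m = {}"
proof -
  have "D \<subseteq> U" "is_chain E D" using assms(5) unfolding maximal_chain_def by auto
  have "D \<noteq> {}"
    using assms(4,5) maximal_chainD by fastforce
  then obtain m where "m \<in> D" and "\<And>c. c \<in> D \<Longrightarrow> card (U_minus E U m) \<le> card (U_minus E U c)"
    using ex_has_least_nat[of "\<lambda>c. c \<in> D" _ "\<lambda>c. card (U_minus E U c)"] by blast
  then have "U_minus E U m = {}"
    using chain_edge_if_card_U_minus_le[OF assms(1-3) \<open>is_chain E D\<close> \<open>D \<subseteq> U\<close>]
    by (intro maximal_chain_U_minus_bottom[OF assms(1,2,5)]) auto
  then show ?thesis using \<open>m \<in> D\<close> by blast
qed

lemma maximal_chain_meets_U_d:
  assumes trans: "trans E" and irrefl: "irrefl E" and "finite U" "U \<noteq> {}"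
    and D: "maximal_chain E U D" and d: "real (card U) / 2 \<le> d"
  shows "\<exists>v\<in>D. v \<in> U_d E U d"
proof -
  define a where "a x = card (U_minus E U x)" for x
  have "D \<subseteq> U" "is_chain E D" using D unfolding maximal_chain_def by auto
  note rank = chain_edge_if_card_U_minus_le[OF trans irrefl \<open>finite U\<close> \<open>is_chain E D\<close> \<open>D \<subseteq> U\<close>,
      folded a_def]
  obtain m where "m \<in> D" "U_minus E U m = {}"
    using maximal_chain_ex_U_minus_empty[OF assms(1-5)] by blast
  define L where "L = {c \<in> D. real (a c) \<le> d}"
  have "m \<in> L" using \<open>m \<in> D\<close> \<open>U_minus E U m = {}\<close> d unfolding L_def a_def by simp
  moreover have "\<forall>c. c \<in> L \<longrightarrow> a c < Suc (card U)"
    unfolding L_def a_def U_minus_def using \<open>finite U\<close> by (simp add: card_mono le_imp_less_Suc)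
  ultimately obtain v where "v \<in> L" and v_top: "\<And>c. c \<in> L \<Longrightarrow> a c \<le> a v"
    using ex_has_greatest_nat[of "\<lambda>c. c \<in> L" _ a] by blast
  have "v \<in> D" "real (a v) \<le> d" using \<open>v \<in> L\<close> unfolding L_def by auto
  have "real (card (U_plus E U v)) \<le> d"
  proof (cases "\<exists>h\<in>D. d < real (a h)")
    case False
    then have "U_plus E U v = {}"
      using rank v_top \<open>v \<in> D\<close> unfolding L_def
      by (intro maximal_chain_U_plus_top[OF trans irrefl D]) (auto simp: not_less)
    then show ?thesis using d by simp
  next
    case True
    then obtain v' where "v' \<in> D" "d < real (a v')"
      and v'_bottom: "\<And>c. c \<in> D \<Longrightarrow> d < real (a c) \<Longrightarrow> a v' \<le> a c"
      using ex_has_least_nat[of "\<lambda>c. c \<in> D \<and> d < real (a c)" _ a] by blast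
    have "c = v \<or> (c, v) \<in> E \<or> c = v' \<or> (v', c) \<in> E" if "c \<in> D" for c
      using rank[of c v] rank[of v' c] v_top[of c] v'_bottom[of c] that \<open>v \<in> D\<close> \<open>v' \<in> D\<close>
      unfolding L_def by force
    then have "U_plus E U v \<inter> U_minus E U v' = {}"
      using \<open>v \<in> D\<close> \<open>v' \<in> D\<close> by (intro maximal_chain_U_plus_U_minus_disjoint[OF trans irrefl D])
    then have "card (U_plus E U v) + a v' \<le> card U"
      unfolding a_def by (rule card_U_plus_add_card_U_minus_le[OF \<open>finite U\<close>])
    then show ?thesis using \<open>d < real (a v')\<close> d by linarith
  qed
  then have "v \<in> U_d E U d"
    using \<open>v \<in> D\<close> \<open>D \<subseteq> U\<close> \<open>real (a v) \<le> d\<close> unfolding U_d_def a_def by auto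
  then show ?thesis using \<open>v \<in> D\<close> by blast
qed

theorem mainTheorem2:
  fixes V :: "'a set" and E :: "('a \<times> 'a) set" and w :: "'a \<Rightarrow> real"
    and U :: "'a set" and d :: real
  assumes "transitive_dag V E"
    and "\<forall>v\<in>V. w v \<ge> 0"
    and "U \<subseteq> V" and "U \<noteq> {}"
    and "d \<ge> real (card U) / 2"
  shows "(\<exists>v\<in>U_d E U d. rU E w U v = opt E w U)
         \<and> U_d E U d \<noteq> {} \<and> Max (rU E w U ` U_d E U d) = opt E w U"
proof -
  note order = transitive_dagD[OF assms(1)]
  have "finite U" using order(3) assms(3) finite_subset by blast
  obtain D where D: "maximal_chain E U D" and "chain_weight w D = opt E w U"
    using ex_maximal_chain_weight_eq_opt[OF \<open>finite U\<close>] assms(2,3) by blast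
  obtain v where "v \<in> D" and v: "v \<in> U_d E U d"
    using maximal_chain_meets_U_d[OF order(1,2) \<open>finite U\<close> assms(4) D assms(5)] by blast
  have rv: "rU E w U v = opt E w U"
    using rU_eq_opt[OF \<open>finite U\<close> _ _ \<open>v \<in> D\<close> \<open>chain_weight w D = opt E w U\<close>] D
    unfolding maximal_chain_def by blast
  moreover have "U_d E U d \<subseteq> U" unfolding U_d_def by auto
  ultimately have "Max (rU E w U ` U_d E U d) = opt E w U"
    using Max_rU_image_eq_opt[OF \<open>finite U\<close>] v by blast
  then show ?thesis using v rv by blast
qed

end
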